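(* Let $\frac23\le M<\frac34$. Algorithm D (defined in the context) has migration factor at most $M$, and on every input whose optimal offline makespan is $1$ it produces a schedule of makespan at most $2-M$. Hence its competitive ratio is at most $2-M$.
   Context: Model (two hierarchical machines with migration, bin stretching). Jobs $1,2,\dots,n$ arrive one by one ($n$ unknown in advance). Job $j$ has a size $p_j>0$ and a grade of service (GoS) $g_j\in\{1,2\}$; a job of GoS $1$ may only be processed on machine $m_1$, a job of GoS $2$ may be processed on $m_1$ or on $m_2$. The load of a machine is the total size of its jobs, the makespan is the maximum load. When job $j$ arrives, the algorithm must assign it, and may migrate previously arrived jobs (respecting GoS) of total size at most $M\cdot p_j$ (migration factor $M$). Bin stretching: the optimal offline makespan of the complete input is known in advance and scaled to $1$. The competitive ratio is the supremum over inputs of (algorithm's makespan)/(optimal makespan). Notation: $Y_{j}$ is the set of jobs on $m_2$ just after job $j$ has been handled, $y_j$ its total size, $y_0=0$; "sorted $Y_{j-1}$" lists $Y_{j-1}$ in non-increasing order of size; $w_j$ is the total size of the (current) set $W$. Algorithm D (parameter $M$). On arrival of job $j$: Step 2: if $g_j=1$ or $y_{j-1}\ge M$, assign $j$ to $m_1$. Step 3: else if $y_{j-1}+p_j\le 2-M$, assign $j$ to $m_2$. Step 4: else if $p_j\ge M$: let $W$ be the longest prefix of sorted $Y_{j-1}$ with total size at most $M\cdot p_j$ (possibly empty). If $y_{j-1}-w_j+p_j>2-M$, assign $j$ to $m_1$; otherwise migrate the jobs of $W$ to $m_1$ and assign $j$ to $m_2$. Step 5: else (so $p_j<M$): let $W$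 be the shortest prefix of sorted $Y_{j-1}$ with total size at least $M/3$ (or $Y_{j-1}$ if none exists). If $w_j>\min\{2M/3,\,M\cdot p_j\}$, replace $W$ by $Y_{j-1}\setminus W$. Then, if $y_{j-1}-w_j+p_j>2-M$, assign $j$ to $m_1$; otherwise migrate the jobs of $W$ to $m_1$ and assign $j$ to $m_2$. *)

theory Defs
  imports Complex_Main
begin

text \<open>Jobs are indexed 0,1,2,... in order of arrival; job i has size p i and
GoS g i (1 or 2). A state is the set Y of (indices of) jobs currently on
machine m2; all other arrived jobs are on machine m1.\<close>

definition load :: "(nat \<Rightarrow> real) \<Rightarrow> nat set \<Rightarrow> real" where
  "load p S = (\<Sum>i\<in>S. p i)"

definition sorted_noninc :: "(nat \<Rightarrow> real) \<Rightarrow> nat list \<Rightarrow> bool" where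
  "sorted_noninc p xs \<longleftrightarrow> distinct xs \<and> sorted_wrt (\<lambda>a b. p a \<ge> p b) xs"

definition prefix_sum :: "(nat \<Rightarrow> real) \<Rightarrow> nat list \<Rightarrow> nat \<Rightarrow> real" where
  "prefix_sum p xs k = sum_list (map p (take k xs))"

definition W_step4 :: "real \<Rightarrow> (nat \<Rightarrow> real) \<Rightarrow> nat list \<Rightarrow> real \<Rightarrow> nat set" where
  "W_step4 M p xs pj =
     set (take (GREATEST k. k \<le> length xs \<and> prefix_sum p xs k \<le> M * pj) xs)"

definition W0_step5 :: "real \<Rightarrow> (nat \<Rightarrow> real) \<Rightarrow> nat list \<Rightarrow> nat set" where
  "W0_step5 M p xs =
     (if \<exists>k\<le>length xs. prefix_sum p xs k \<ge> M / 3
      then set (take (LEAST k. k \<le> length xs \<and> prefix_sum p xs k \<ge> M / 3) xs)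
      else set xs)"

definition W_step5 :: "real \<Rightarrow> (nat \<Rightarrow> real) \<Rightarrow> nat list \<Rightarrow> real \<Rightarrow> nat set" where
  "W_step5 M p xs pj =
     (let W0 = W0_step5 M p xs in
      if load p W0 > min (2 * M / 3) (M * pj) then set xs - W0 else W0)"

definition try_migrate :: "real \<Rightarrow> (nat \<Rightarrow> real) \<Rightarrow> nat set \<Rightarrow> nat \<Rightarrow> nat set \<Rightarrow> nat set" where
  "try_migrate M p Y j W =
     (if load p Y - load p W + p j > 2 - M then Y else insert j (Y - W))"

text \<open>One step of Algorithm D: job j arrives while Y is the set of jobs on m2;
Y' is the set of jobs on m2 after handling j. Nondeterminism only in the
tie-breaking of the sorted order of Y.\<close>
definition D_step :: "real \<Rightarrow> (nat \<Rightarrow> real) \<Rightarrow> (nat \<Rightarrow> nat) \<Rightarrow> nat set \<Rightarrow> nat \<Rightarrow> nat set \<Rightarrow> bool" where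
  "D_step M p g Y j Y' \<longleftrightarrow>
     (if g j = 1 \<or> load p Y \<ge> M then Y' = Y
      else if load p Y + p j \<le> 2 - M then Y' = insert j Y
      else if p j \<ge> M then
        (\<exists>xs. set xs = Y \<and> sorted_noninc p xs \<and> Y' = try_migrate M p Y j (W_step4 M p xs (p j)))
      else
        (\<exists>xs. set xs = Y \<and> sorted_noninc p xs \<and> Y' = try_migrate M p Y j (W_step5 M p xs (p j))))"

text \<open>A run of Algorithm D on the first n jobs: Ys k is the set of jobs on m2
after the first k jobs (jobs 0..k-1) have been handled.\<close>
definition D_run :: "real \<Rightarrow> (nat \<Rightarrow> real) \<Rightarrow> (nat \<Rightarrow> nat) \<Rightarrow> nat \<Rightarrow> (nat \<Rightarrow> nat set) \<Rightarrow> bool" where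
  "D_run M p g n Ys \<longleftrightarrow> Ys 0 = {} \<and> (\<forall>j<n. D_step M p g (Ys j) j (Ys (Suc j)))"

definition makespan :: "nat \<Rightarrow> (nat \<Rightarrow> real) \<Rightarrow> nat set \<Rightarrow> real" where
  "makespan n p A = max (load p ({..<n} - A)) (load p A)"

definition feasible :: "nat \<Rightarrow> (nat \<Rightarrow> nat) \<Rightarrow> nat set \<Rightarrow> bool" where
  "feasible n g A \<longleftrightarrow> A \<subseteq> {..<n} \<and> (\<forall>i\<in>A. g i = 2)"

definition opt_makespan :: "nat \<Rightarrow> (nat \<Rightarrow> real) \<Rightarrow> (nat \<Rightarrow> nat) \<Rightarrow> real" where
  "opt_makespan n p g = Min {makespan n p A | A. feasible n g A}"

definition migrated :: "nat \<Rightarrow> nat set \<Rightarrow> nat set \<Rightarrow> nat set" where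
  "migrated j Y Y' = {i. i < j \<and> ((i \<in> Y) \<noteq> (i \<in> Y'))}"

end

theory Submission
  imports Defs
begin

text \<open>Steps 4 and 5 are designed so that whenever m2 overflows and jobs are migrated, the
  load of m2 becomes at least M (and stays at most 2 - M). Hence either m2 ends with load
  at least M, and m1 gets at most 2 - M since the total load is at most 2, or m2 stays below
  M throughout and no migration ever happens. In the second case m1 holds the GoS-1 jobs and
  the rejected GoS-2 jobs, and each rejected job b was blocked by jobs already on m2: they
  cannot share a machine with b in an optimal schedule and are too large to share one with
  another rejected job, or with all GoS-1 jobs. So at most one job is rejected, and it fits
  together with the GoS-1 jobs within 2 - M.\<close>

lemma load_mono:
  assumes "finite B" "A \<subseteq> B" "\<forall>i\<in>B. 0 \<le> p i"
  shows "load p A \<le> load p B"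
  unfolding load_def using assms by (intro sum_mono2) auto

lemma load_diff:
  assumes "finite B" "A \<subseteq> B"
  shows "load p (B - A) = load p B - load p A"
  unfolding load_def using assms by (simp add: sum_diff finite_subset)

lemma load_insert:
  assumes "finite B" "j \<notin> B"
  shows "load p (insert j B) = p j + load p B"
  unfolding load_def using assms by simp

lemma load_union:
  assumes "finite A" "finite B" "A \<inter> B = {}"
  shows "load p (A \<union> B) = load p A + load p B"
  unfolding load_def using assms by (simp add: sum.union_disjoint)

lemma load_set: "distinct xs \<Longrightarrow> load p (set xs) = sum_list (map p xs)"
  by (simp add: load_def sum.distinct_set_conv_list)

lemma prefix_sum_eq_load: "distinct xs \<Longrightarrow> prefix_sum p xs k = load p (set (take k xs))"
  by (simp add: prefix_sum_def load_set)

lemma prefix_sum_Suc: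
  "k < length xs \<Longrightarrow> prefix_sum p xs (Suc k) = prefix_sum p xs k + p (xs ! k)"
  by (simp add: prefix_sum_def take_Suc_conv_app_nth)

lemma sorted_noninc_nth_mono:
  "sorted_noninc p xs \<Longrightarrow> i \<le> k \<Longrightarrow> k < length xs \<Longrightarrow> p (xs ! k) \<le> p (xs ! i)"
  unfolding sorted_noninc_def by (cases "i = k") (auto simp: sorted_wrt_iff_nth_less)

lemma sorted_noninc_take_ge:
  assumes "sorted_noninc p xs" "k < length xs" "z \<in> set (take (Suc k) xs)"
  shows "p (xs ! k) \<le> p z"
proof -
  obtain i where "i \<le> k" "z = xs ! i"
    using assms(3) by (auto simp: in_set_conv_nth less_Suc_eq_le)
  then show ?thesis using sorted_noninc_nth_mono[OF assms(1)] assms(2) by auto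
qed

lemma W_step4_spec:
  assumes "0 \<le> M * pj"
  obtains k where "k \<le> length xs" "W_step4 M p xs pj = set (take k xs)"
    "prefix_sum p xs k \<le> M * pj" "k < length xs \<Longrightarrow> M * pj < prefix_sum p xs (Suc k)"
proof -
  define P where "P = (\<lambda>k. k \<le> length xs \<and> prefix_sum p xs k \<le> M * pj)"
  have bound: "\<And>k. P k \<Longrightarrow> k \<le> length xs" by (simp add: P_def)
  have "P 0" using assms by (simp add: P_def prefix_sum_def)
  then have "P (Greatest P)" using GreatestI_nat bound by blast
  moreover have "M * pj < prefix_sum p xs (Suc (Greatest P))" if "Greatest P < length xs"
  proof (rule ccontr)
    assume "\<not> ?thesis"
    with that have "P (Suc (Greatest P))" by (simp add: P_def)
    then show False using Greatest_le_nat[of P _ "length xs"] bound by fastforce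
  qed
  ultimately show ?thesis
    using that[of "Greatest P"] unfolding P_def W_step4_def by blast
qed

lemma prefix_sum_mono:
  assumes "distinct xs" "\<forall>i\<in>set xs. 0 \<le> p i" "i \<le> k"
  shows "prefix_sum p xs i \<le> prefix_sum p xs k"
  unfolding prefix_sum_eq_load[OF assms(1)] using assms
  by (intro load_mono) (auto simp: set_take_subset_set_take dest: in_set_takeD)

lemma W0_step5_subset: "W0_step5 M p xs \<subseteq> set xs"
  unfolding W0_step5_def by (auto dest: in_set_takeD)

text \<open>The shortest prefix reaching M/3 consists of one job or has load below 2M/3,
  since each of its jobs is no larger than the first one.\<close>
lemma W0_step5_load_cases:
  assumes srt: "sorted_noninc p xs" and pos: "\<forall>i\<in>set xs. 0 \<le> p i" and "0 < M"
  defines "W0 \<equiv> W0_step5 M p xs"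
  shows "(W0 = set xs \<and> load p W0 < M / 3)
    \<or> (M / 3 \<le> load p W0 \<and> (load p W0 < 2 * M / 3 \<or> (\<exists>x\<in>set xs. load p W0 = p x)))"
proof -
  have dist: "distinct xs" using srt by (simp add: sorted_noninc_def)
  show ?thesis
  proof (cases "\<exists>k\<le>length xs. M / 3 \<le> prefix_sum p xs k")
    case False
    then have "load p (set xs) < M / 3"
      using prefix_sum_eq_load[OF dist, of p "length xs"] by auto
    moreover have "W0 = set xs" using False unfolding W0_def W0_step5_def by (simp only: if_False)
    ultimately show ?thesis by simp
  next
    case True
    define P where "P = (\<lambda>k. k \<le> length xs \<and> M / 3 \<le> prefix_sum p xs k)"
    define k where "k = Least P"
    have Pk: "P k" unfolding k_def P_def using True by (metis (mono_tags, lifting) LeastI)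
    have lW0: "load p W0 = prefix_sum p xs k"
      using True by (simp add: W0_def W0_step5_def k_def P_def prefix_sum_eq_load[OF dist])
    have "k \<noteq> 0" using Pk \<open>0 < M\<close> by (cases k) (auto simp: P_def prefix_sum_def)
    then have k: "k = Suc (k - 1)" "k - 1 < length xs" using Pk by (auto simp: P_def)
    have below: "prefix_sum p xs (k - 1) < M / 3"
      using not_less_Least[of "k - 1" P] Pk k by (auto simp: k_def P_def)
    have split: "prefix_sum p xs k = prefix_sum p xs (k - 1) + p (xs ! (k - 1))"
      using prefix_sum_Suc[OF k(2)] k(1) by simp
    have "load p W0 < 2 * M / 3 \<or> (\<exists>x\<in>set xs. load p W0 = p x)"
    proof (cases "k = 1")
      case True
      then show ?thesis using split k lW0 nth_mem[of 0 xs] by (auto simp: prefix_sum_def)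
    next
      case False
      have "p (xs ! (k - 1)) \<le> p (xs ! 0)"
        using sorted_noninc_nth_mono[OF srt, of 0 "k - 1"] k by simp
      also have "\<dots> = prefix_sum p xs 1"
        using prefix_sum_Suc[of 0 xs p] k by (cases xs) (auto simp: prefix_sum_def)
      also have "\<dots> \<le> prefix_sum p xs (k - 1)"
        using prefix_sum_mono[OF dist pos] False \<open>k \<noteq> 0\<close> by simp
      finally show ?thesis using split below lW0 by simp
    qed
    then show ?thesis using Pk lW0 by (simp add: P_def)
  qed
qed

text \<open>No schedule of makespan 1 puts a job of Z on the same machine as j. The two
  lower bounds on the load of Z are what rules out, respectively, a second rejected job
  and the GoS-1 jobs sharing a machine with Z.\<close>
definition blocked_by :: "real \<Rightarrow> (nat \<Rightarrow> real) \<Rightarrow> nat set \<Rightarrow> nat \<Rightarrow> bool" where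
  "blocked_by M p Y j \<longleftrightarrow>
     (\<exists>Z\<subseteq>Y. (\<forall>z\<in>Z. 1 < p z + p j) \<and> 2 * M - 1 < load p Z \<and> M + p j - 1 < load p Z)"

definition migration_candidate :: "real \<Rightarrow> (nat \<Rightarrow> real) \<Rightarrow> nat set \<Rightarrow> nat \<Rightarrow> nat set \<Rightarrow> bool" where
  "migration_candidate M p Y j W \<longleftrightarrow>
     W \<subseteq> Y \<and> load p W \<le> M * p j \<and> M \<le> load p Y - load p W + p j
     \<and> (2 - M < load p Y - load p W + p j \<longrightarrow> blocked_by M p Y j)"

lemma try_migrate_cases:
  assumes "finite Y" "j \<notin> Y" "W \<subseteq> Y"
  obtains (reject) "try_migrate M p Y j W = Y" "2 - M < load p Y - load p W + p j"
  | (migrate) "try_migrate M p Y j W = insert j (Y - W)"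
      "load p (insert j (Y - W)) = load p Y - load p W + p j"
      "load p Y - load p W + p j \<le> 2 - M"
proof (cases "2 - M < load p Y - load p W + p j")
  case True
  then show ?thesis using reject by (simp add: try_migrate_def)
next
  case False
  have "load p (insert j (Y - W)) = load p Y - load p W + p j"
    using assms by (simp add: load_insert load_diff)
  with False show ?thesis using migrate by (simp add: try_migrate_def)
qed

lemma W_step4_migration_candidate:
  assumes M: "2 / 3 \<le> M" "M < 3 / 4" and pj: "M \<le> p j" "p j \<le> 1"
    and srt: "sorted_noninc p xs" and nonneg: "\<forall>i\<in>set xs. 0 \<le> p i"
    and low: "load p (set xs) < M"
  shows "migration_candidate M p (set xs) j (W_step4 M p xs (p j))"
proof -
  have dist: "distinct xs" using srt by (simp add: sorted_noninc_def)
  have "0 \<le> M * p j" using M pj by simp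
  then obtain k where k: "k \<le> length xs" and W: "W_step4 M p xs (p j) = set (take k xs)"
    and w: "prefix_sum p xs k \<le> M * p j"
    and next_job: "k < length xs \<Longrightarrow> M * p j < prefix_sum p xs (Suc k)"
    using W_step4_spec by blast
  define y where "y = load p (set xs)"
  have Wsub: "set (take k xs) \<subseteq> set xs" by (rule set_take_subset)
  have lW: "load p (set (take k xs)) = prefix_sum p xs k" using prefix_sum_eq_load[OF dist] by simp
  have "load p (set (take k xs)) \<le> y"
    unfolding y_def using nonneg by (intro load_mono[OF _ Wsub]) auto
  then have fills: "M \<le> y - load p (set (take k xs)) + p j" using pj by simp
  have MM: "2 * M - 1 \<le> M * p j"
  proof -
    have "M * M \<le> M * p j" using M pj by (intro mult_left_mono) auto
    moreover have "0 \<le> (1 - M) * (1 - M)" by simp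
    ultimately show ?thesis by (simp add: algebra_simps)
  qed
  have blocked: "blocked_by M p (set xs) j" if reject: "2 - M < y - prefix_sum p xs k + p j"
  proof -
    have kl: "k < length xs"
    proof (rule ccontr)
      assume "\<not> k < length xs"
      then have "prefix_sum p xs k = y" using k lW by (simp add: y_def)
      then show False using reject pj M by simp
    qed
    define Z where "Z = set (take (Suc k) xs)"
    have lZ: "M * p j < load p Z"
      using next_job[OF kl] prefix_sum_eq_load[OF dist] by (simp add: Z_def)
    have "1 < p (xs ! k) + p j"
      using next_job[OF kl] prefix_sum_Suc[OF kl] reject w low MM by (simp add: y_def)
    then have "\<forall>z\<in>Z. 1 < p z + p j"
      using sorted_noninc_take_ge[OF srt kl] unfolding Z_def by force
    moreover have "M + p j - 1 \<le> M * p j"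
      using mult_left_mono[of "p j" 1 "1 - M"] pj M by (simp add: algebra_simps)
    moreover have "Z \<subseteq> set xs" by (simp add: Z_def set_take_subset)
    ultimately show ?thesis using lZ MM unfolding blocked_by_def by (meson le_less_trans)
  qed
  show ?thesis
    unfolding migration_candidate_def W using Wsub lW w fills blocked by (simp add: y_def)
qed

lemma W_step5_migration_candidate:
  assumes M: "2 / 3 \<le> M" "M < 3 / 4" and pj: "p j < M"
    and srt: "sorted_noninc p xs" and nonneg: "\<forall>i\<in>set xs. 0 \<le> p i"
    and low: "load p (set xs) < M" and over: "2 - M < load p (set xs) + p j"
  shows "migration_candidate M p (set xs) j (W_step5 M p xs (p j))"
proof -
  define W0 where "W0 = W0_step5 M p xs"
  define y where "y = load p (set xs)"
  have W0sub: "W0 \<subseteq> set xs" by (simp add: W0_def W0_step5_subset)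
  have W0_cases: "(W0 = set xs \<and> load p W0 < M / 3)
      \<or> (M / 3 \<le> load p W0 \<and> (load p W0 < 2 * M / 3 \<or> (\<exists>x\<in>set xs. load p W0 = p x)))"
    using W0_step5_load_cases[OF srt nonneg] M by (simp add: W0_def)
  have big_job: "2 - 2 * M < p j" using low over by simp
  show ?thesis
  proof (cases "min (2 * M / 3) (M * p j) < load p W0")
    case False
    then have W: "W_step5 M p xs (p j) = W0" by (simp add: W_step5_def W0_def)
    have "\<not> 2 - M < y - load p W0 + p j" using W0_cases pj M low by (auto simp: y_def)
    then show ?thesis
      unfolding migration_candidate_def W using W0sub False over M by (auto simp: y_def)
  next
    case True
    then have W: "W_step5 M p xs (p j) = set xs - W0" by (simp add: W_step5_def W0_def Let_def)
    have lW: "load p (set xs - W0) = y - load p W0" by (simp add: load_diff[OF _ W0sub] y_def)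
    have half: "M / 2 < M * p j"
      using mult_strict_left_mono[of "1 / 2" "p j" M] big_job M by simp
    have "M \<le> load p W0 + p j"
    proof (cases "2 * M / 3 < load p W0")
      case False
      then have "M * p j < load p W0" using True by simp
      moreover have "(1 + M) * (2 - 2 * M) \<le> (1 + M) * p j"
        using big_job M by (intro mult_left_mono) auto
      moreover have "M * M \<le> M * (3 / 4)" using M by (intro mult_left_mono) auto
      moreover have "(1 + M) * (2 - 2 * M) = 2 - 2 * (M * M)" "(1 + M) * p j = p j + M * p j"
        by (simp_all add: algebra_simps)
      ultimately show ?thesis using M by linarith
    qed (use big_job M in simp)
    moreover have "load p (set xs - W0) \<le> M * p j"
      using True unfolding min_less_iff_disj
    proof
      assume "2 * M / 3 < load p W0"
      then show ?thesis using lW low half M unfolding y_def by linarith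
    next
      assume "M * p j < load p W0"
      then show ?thesis using lW low half by (simp add: y_def)
    qed
    moreover have "blocked_by M p (set xs) j" if reject: "2 - M < load p W0 + p j"
    proof -
      obtain x where x: "x \<in> set xs" "load p W0 = p x"
        using W0_cases reject pj M by auto
      have "{x} \<subseteq> set xs" "1 < p x + p j" "2 * M - 1 < p x" "M + p j - 1 < p x"
        using x reject pj M by auto
      then show ?thesis unfolding blocked_by_def by (intro exI[of _ "{x}"]) (simp add: load_def)
    qed
    ultimately show ?thesis unfolding migration_candidate_def W using lW by (simp add: y_def)
  qed
qed

lemma D_step_overflow_candidate:
  assumes M: "2 / 3 \<le> M" "M < 3 / 4" and pj: "p j \<le> 1" and nonneg: "\<forall>i\<in>Y. 0 \<le> p i"
    and gos: "g j \<noteq> 1" and low: "load p Y < M" and over: "2 - M < load p Y + p j"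
    and step: "D_step M p g Y j Y'"
  obtains W where "migration_candidate M p Y j W" "Y' = try_migrate M p Y j W"
proof (cases "M \<le> p j")
  case True
  with step gos low over obtain xs where xs: "set xs = Y" "sorted_noninc p xs"
    "Y' = try_migrate M p Y j (W_step4 M p xs (p j))"
    by (auto simp: D_step_def)
  show ?thesis
  proof (rule that)
    show "migration_candidate M p Y j (W_step4 M p xs (p j))"
      using W_step4_migration_candidate[OF M True pj xs(2)] nonneg low by (simp add: xs(1))
  qed (fact xs(3))
next
  case False
  with step gos low over obtain xs where xs: "set xs = Y" "sorted_noninc p xs"
    "Y' = try_migrate M p Y j (W_step5 M p xs (p j))"
    by (auto simp: D_step_def)
  show ?thesis
  proof (rule that)
    show "migration_candidate M p Y j (W_step5 M p xs (p j))"
      using W_step5_migration_candidate[OF M _ xs(2)] False nonneg low over by (simp add: xs(1))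
  qed (fact xs(3))
qed

lemma D_step_cases:
  assumes M: "2 / 3 \<le> M" "M < 3 / 4" and pj: "p j \<le> 1"
    and fin: "finite Y" and new: "j \<notin> Y" and nonneg: "\<forall>i\<in>Y. 0 \<le> p i"
    and step: "D_step M p g Y j Y'"
  obtains (keep) "g j = 1 \<or> M \<le> load p Y" "Y' = Y"
  | (add) "g j \<noteq> 1" "load p Y < M" "load p Y + p j \<le> 2 - M" "Y' = insert j Y"
  | (migrate) W where "g j \<noteq> 1" "load p Y < M" "W \<subseteq> Y" "load p W \<le> M * p j"
      "Y' = insert j (Y - W)" "M \<le> load p Y'" "load p Y' \<le> 2 - M"
  | (reject) "g j \<noteq> 1" "load p Y < M" "2 - M < load p Y + p j" "Y' = Y" "blocked_by M p Y j"
proof -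
  consider "g j = 1 \<or> M \<le> load p Y" | "g j \<noteq> 1" "load p Y < M" "load p Y + p j \<le> 2 - M"
    | "g j \<noteq> 1" "load p Y < M" "2 - M < load p Y + p j"
    by fastforce
  then show thesis
  proof cases
    case 1
    with step have "Y' = Y" by (auto simp: D_step_def)
    with 1 show ?thesis by (rule keep)
  next
    case 2
    with step have "Y' = insert j Y" by (simp add: D_step_def)
    with 2 show ?thesis by (rule add)
  next
    case 3
    obtain W where W: "migration_candidate M p Y j W" and Y': "Y' = try_migrate M p Y j W"
      using D_step_overflow_candidate[OF M pj nonneg 3 step] .
    have WY: "W \<subseteq> Y" using W by (simp add: migration_candidate_def)
    show ?thesis
    proof (cases rule: try_migrate_cases[OF fin new WY, of M p])
      case 1
      show ?thesis
        by (rule reject) (use 1 3 W in \<open>auto simp: Y' migration_candidate_def\<close>)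
    next
      case 2
      show ?thesis
        by (rule migrate[OF _ _ WY]) (use 2 3 W in \<open>auto simp: Y' migration_candidate_def\<close>)
    qed
  qed
qed

lemma opt_makespan_attained:
  obtains A where "feasible n g A" "makespan n p A = opt_makespan n p g"
proof -
  have "{A. feasible n g A} \<subseteq> Pow {..<n}" by (auto simp: feasible_def)
  then have "finite {A. feasible n g A}" by (rule finite_subset) simp
  then have "finite {makespan n p A | A. feasible n g A}" by (simp add: setcompr_eq_image)
  moreover have "feasible n g {}" by (simp add: feasible_def)
  ultimately have "opt_makespan n p g \<in> {makespan n p A | A. feasible n g A}"
    unfolding opt_makespan_def by (intro Min_in) auto
  then obtain A where "feasible n g A" "opt_makespan n p g = makespan n p A" by blast
  then show ?thesis using that by simp
qed

lemma load_le_makespan: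
  assumes "feasible n g A" "\<forall>i<n. 0 \<le> p i" "S \<subseteq> A \<or> S \<subseteq> {..<n} - A"
  shows "load p S \<le> makespan n p A"
proof -
  have "A \<subseteq> {..<n}" using assms(1) by (simp add: feasible_def)
  then have "load p S \<le> load p A \<or> load p S \<le> load p ({..<n} - A)"
    using assms(2,3) finite_subset[of A "{..<n}"] by (auto intro!: load_mono)
  then show ?thesis by (auto simp: makespan_def)
qed

lemma job_le_makespan:
  assumes "feasible n g A" "\<forall>i<n. 0 \<le> p i" "i < n"
  shows "p i \<le> makespan n p A"
  using load_le_makespan[OF assms(1,2), of "{i}"] assms(3) by (cases "i \<in> A") (auto simp: load_def)

lemma migrated_same: "migrated j Y Y = {}"
  by (simp add: migrated_def)

lemma migrated_insert: "migrated j Y (insert j Y) = {}"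
  by (auto simp: migrated_def)

lemma migrated_remove: "W \<subseteq> Y \<Longrightarrow> Y \<subseteq> {..<j} \<Longrightarrow> migrated j Y (insert j (Y - W)) = W"
  by (auto simp: migrated_def)

locale D_run_bounded =
  fixes M :: real and n :: nat and p :: "nat \<Rightarrow> real" and g :: "nat \<Rightarrow> nat"
    and Ys :: "nat \<Rightarrow> nat set"
  assumes M_ge: "2 / 3 \<le> M" and M_lt: "M < 3 / 4"
    and job: "\<And>i. i < n \<Longrightarrow> 0 < p i \<and> p i \<le> 1 \<and> g i \<in> {1, 2}"
    and run: "D_run M p g n Ys"
begin

lemma Ys_invariant: "t \<le> n \<Longrightarrow> Ys t \<subseteq> {..<t} \<and> (\<forall>i\<in>Ys t. g i = 2) \<and> load p (Ys t) \<le> 2 - M"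
proof (induction t)
  case 0
  then show ?case using run M_lt by (simp add: D_run_def load_def)
next
  case (Suc t)
  then have t: "t < n" and IH: "Ys t \<subseteq> {..<t}" "\<forall>i\<in>Ys t. g i = 2" "load p (Ys t) \<le> 2 - M"
    by auto
  have fin: "finite (Ys t)" and new: "t \<notin> Ys t" and nonneg: "\<forall>i\<in>Ys t. 0 \<le> p i"
    using IH(1) job t finite_subset[OF IH(1)] by (auto simp: less_imp_le)
  have step: "D_step M p g (Ys t) t (Ys (Suc t))" using run t by (simp add: D_run_def)
  have pj: "p t \<le> 1" and gos2: "g t \<noteq> 1 \<Longrightarrow> g t = 2" using job[OF t] by auto
  show ?case
  proof (cases rule: D_step_cases[OF M_ge M_lt pj fin new nonneg step, case_names keep add migrate reject])
    case add
    then show ?thesis using IH gos2 load_insert[OF fin new] by auto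
  next
    case (migrate W)
    then show ?thesis using IH gos2 by auto
  qed (use IH in auto)
qed

lemma finite_Ys: "t \<le> n \<Longrightarrow> finite (Ys t)"
  using Ys_invariant finite_subset by blast

lemma Ys_step_cases [consumes 1, case_names keep add migrate reject]:
  assumes j: "j < n"
  obtains (keep) "g j = 1 \<or> M \<le> load p (Ys j)" "Ys (Suc j) = Ys j"
  | (add) "g j \<noteq> 1" "load p (Ys j) < M" "load p (Ys j) + p j \<le> 2 - M"
      "Ys (Suc j) = insert j (Ys j)"
  | (migrate) W where "g j \<noteq> 1" "load p (Ys j) < M" "W \<subseteq> Ys j" "load p W \<le> M * p j"
      "Ys (Suc j) = insert j (Ys j - W)" "M \<le> load p (Ys (Suc j))"
  | (reject) "g j \<noteq> 1" "load p (Ys j) < M" "2 - M < load p (Ys j) + p j"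
      "Ys (Suc j) = Ys j" "blocked_by M p (Ys j) j"
proof -
  have Y: "Ys j \<subseteq> {..<j}" using Ys_invariant j by simp
  have pj: "p j \<le> 1" and nonneg: "\<forall>i\<in>Ys j. 0 \<le> p i" using Y job j by (auto simp: less_imp_le)
  have step: "D_step M p g (Ys j) j (Ys (Suc j))" using run j by (simp add: D_run_def)
  have new: "j \<notin> Ys j" using Y by auto
  show ?thesis
    by (rule D_step_cases[OF M_ge M_lt pj finite_subset[OF Y finite_lessThan] new nonneg step])
      (rule keep add migrate reject; assumption)+
qed

lemma migrated_load:
  assumes j: "j < n"
  shows "load p (migrated j (Ys j) (Ys (Suc j))) \<le> M * p j"
  using j
proof (cases rule: Ys_step_cases)
  case (migrate W)
  moreover have "Ys j \<subseteq> {..<j}" using Ys_invariant j by simp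
  ultimately show ?thesis by (simp add: migrated_remove)
qed (use job[OF j] M_ge in \<open>simp_all add: migrated_same migrated_insert load_def\<close>)

lemma load_Ys_below_M:
  assumes "load p (Ys n) < M" "t \<le> n"
  shows "load p (Ys t) < M"
  using assms(2)
proof (induction rule: inc_induct)
  case (step t)
  from \<open>t < n\<close> show ?case by (cases rule: Ys_step_cases) (use step in auto)
qed (fact assms(1))

definition rejected :: "nat \<Rightarrow> bool" where
  "rejected i \<longleftrightarrow> g i \<noteq> 1 \<and> 2 - M < load p (Ys i) + p i"

lemma Ys_eq_accepted:
  assumes "load p (Ys n) < M" "t \<le> n"
  shows "Ys t = {i. i < t \<and> g i \<noteq> 1 \<and> \<not> rejected i}"
  using assms(2)
proof (induction t)
  case 0
  then show ?case using run by (simp add: D_run_def)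
next
  case (Suc t)
  then have t: "t < n" and IH: "Ys t = {i. i < t \<and> g i \<noteq> 1 \<and> \<not> rejected i}" by simp_all
  have below: "load p (Ys (Suc t)) < M" by (rule load_Ys_below_M[OF assms(1) Suc.prems])
  have split: "{i. i < Suc t \<and> P i} = (if P t then insert t {i. i < t \<and> P i} else {i. i < t \<and> P i})"
    for P by (auto simp: less_Suc_eq)
  from t show ?case
  proof (cases rule: Ys_step_cases)
    case keep
    then show ?thesis using IH below split by auto
  next
    case add
    then show ?thesis using IH split by (simp add: rejected_def)
  next
    case (migrate W)
    then show ?thesis using below by simp
  next
    case reject
    then show ?thesis using IH split by (simp add: rejected_def)
  qed
qed

lemma rejected_blocked:
  assumes "load p (Ys n) < M" "j < n" "rejected j"
  shows "blocked_by M p (Ys j) j"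
proof -
  have below: "load p (Ys (Suc j)) < M" using load_Ys_below_M assms by simp
  from assms(2) show ?thesis
  proof (cases rule: Ys_step_cases)
    case keep
    then show ?thesis using assms(3) below by (simp add: rejected_def)
  next
    case add
    then show ?thesis using assms(3) by (simp add: rejected_def)
  next
    case (migrate W)
    then show ?thesis using below by simp
  qed
qed

end

locale D_run_opt = D_run_bounded +
  fixes A :: "nat set"
  assumes A_feasible: "feasible n g A" and A_makespan: "makespan n p A \<le> 1"
begin

lemma one_side_load: "S \<subseteq> A \<or> S \<subseteq> {..<n} - A \<Longrightarrow> load p S \<le> 1"
  using load_le_makespan[OF A_feasible, of p S] A_makespan job by (force intro: less_imp_le)

definition other_side :: "nat \<Rightarrow> nat set" where
  "other_side b = (if b \<in> A then {..<n} - A else A)"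

lemma other_side_load: "S \<subseteq> other_side b \<Longrightarrow> load p S \<le> 1"
  by (rule one_side_load) (auto simp: other_side_def split: if_splits)

lemma other_side_if_incompatible:
  assumes "x < n" "b < n" "x \<noteq> b" "1 < p x + p b"
  shows "x \<in> other_side b"
proof (rule ccontr)
  assume "x \<notin> other_side b"
  then have "load p {x, b} \<le> 1"
    using assms(1,2) by (intro one_side_load) (auto simp: other_side_def split: if_splits)
  with assms(3,4) show False by (simp add: load_def)
qed

lemma blocker_on_other_side:
  assumes "load p (Ys n) < M" "b < n" "rejected b"
  obtains Z where "Z \<subseteq> Ys b" "Z \<subseteq> other_side b" "2 * M - 1 < load p Z" "M + p b - 1 < load p Z"
proof -
  obtain Z where Z: "Z \<subseteq> Ys b" "\<forall>z\<in>Z. 1 < p z + p b" "2 * M - 1 < load p Z" "M + p b - 1 < load p Z"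
    using rejected_blocked[OF assms] by (auto simp: blocked_by_def)
  have "Z \<subseteq> other_side b"
  proof
    fix z assume "z \<in> Z"
    moreover have "Ys b \<subseteq> {..<b}" using Ys_invariant assms(2) by simp
    ultimately have "z < b" using Z(1) by auto
    then show "z \<in> other_side b"
      using Z(2) \<open>z \<in> Z\<close> assms(2) by (intro other_side_if_incompatible) auto
  qed
  with Z that show ?thesis by blast
qed

lemma rejected_job_big:
  assumes "load p (Ys n) < M" "i < n" "rejected i"
  shows "2 - 2 * M < p i"
  using load_Ys_below_M[OF assms(1), of i] assms(2,3) by (simp add: rejected_def)

text \<open>The other side of the last rejected job b would have to hold an earlier rejected job
  together with the blocker of b.\<close>
lemma rejected_unique:
  assumes below: "load p (Ys n) < M" and "a < b" "b < n" "rejected a" "rejected b"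
  shows False
proof -
  obtain Z where Z: "Z \<subseteq> Ys b" "Z \<subseteq> other_side b" "2 * M - 1 < load p Z"
    by (rule blocker_on_other_side[OF below \<open>b < n\<close> \<open>rejected b\<close>])
  have big: "2 - 2 * M < p a" "2 - 2 * M < p b"
    using rejected_job_big[OF below] assms by auto
  have "a \<notin> Ys b" using Ys_eq_accepted[OF below] assms by auto
  with Z(1) have aZ: "a \<notin> Z" by blast
  have "a \<in> other_side b"
    using big M_lt assms by (intro other_side_if_incompatible) auto
  with Z(2) have "load p (insert a Z) \<le> 1" by (intro other_side_load) auto
  moreover have "finite Z" using Z(1) finite_Ys assms(3) by (meson finite_subset less_imp_le)
  ultimately show False using load_insert[OF _ aZ] Z(3) big by simp
qed

lemma GoS1_rejected_load:
  assumes below: "load p (Ys n) < M" and "b < n" "rejected b"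
  shows "load p {i. i < n \<and> g i = 1} + p b \<le> 2 - M"
proof -
  define G1 where "G1 = {i. i < n \<and> g i = 1}"
  have G1: "G1 \<subseteq> {..<n} - A" "finite G1"
    using A_feasible by (auto simp: G1_def feasible_def)
  have "b \<notin> G1" using \<open>rejected b\<close> by (simp add: G1_def rejected_def)
  show ?thesis
  proof (cases "b \<in> A")
    case False
    then have "load p (insert b G1) \<le> 1" using G1 \<open>b < n\<close> by (intro one_side_load) auto
    then show ?thesis using load_insert[OF G1(2) \<open>b \<notin> G1\<close>] M_lt by (simp add: G1_def)
  next
    case True
    obtain Z where Z: "Z \<subseteq> Ys b" "Z \<subseteq> other_side b" "M + p b - 1 < load p Z"
      by (rule blocker_on_other_side[OF below \<open>b < n\<close> \<open>rejected b\<close>])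
    have "Ys b \<subseteq> {..<b}" "\<forall>i\<in>Ys b. g i = 2" using Ys_invariant[of b] \<open>b < n\<close> by auto
    with Z(1) have "finite Z" "Z \<inter> G1 = {}" by (auto simp: G1_def finite_subset)
    moreover have "load p (Z \<union> G1) \<le> 1"
      using Z(2) G1(1) True by (intro one_side_load) (auto simp: other_side_def)
    ultimately show ?thesis using load_union[of Z G1 p] G1(2) Z(3) by (simp add: G1_def)
  qed
qed

lemma total_load_le: "load p {..<n} \<le> 2"
proof -
  have "A \<subseteq> {..<n}" using A_feasible by (simp add: feasible_def)
  then show ?thesis
    using load_diff[of "{..<n}" A p] one_side_load[of A] one_side_load[of "{..<n} - A"] by simp
qed

lemma rejected_eq:
  assumes below: "load p (Ys n) < M" and "b < n" "rejected b" "c < n" "rejected c"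
  shows "c = b"
proof (rule ccontr)
  assume "c \<noteq> b"
  then consider "c < b" | "b < c" by linarith
  then show False using rejected_unique[OF below] assms by cases auto
qed

lemma m1_load_below_M:
  assumes below: "load p (Ys n) < M"
  shows "load p ({..<n} - Ys n) \<le> 2 - M"
proof -
  define G1 where "G1 = {i. i < n \<and> g i = 1}"
  define R where "R = {i. i < n \<and> rejected i}"
  have m1: "{..<n} - Ys n = G1 \<union> R" "G1 \<inter> R = {}"
    using Ys_eq_accepted[OF below] by (auto simp: G1_def R_def rejected_def)
  show ?thesis
  proof (cases "R = {}")
    case True
    have "load p G1 \<le> 1"
      using A_feasible by (intro one_side_load) (auto simp: G1_def feasible_def)
    then show ?thesis using m1 True M_lt by simp
  next
    case False
    then obtain b where b: "b \<in> R" by blast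
    with rejected_eq[OF below] have "R = {b}" by (auto simp: R_def)
    then have "load p ({..<n} - Ys n) = load p G1 + p b"
      using m1 load_insert[of G1 b p] by (auto simp: G1_def)
    then show ?thesis using GoS1_rejected_load[OF below] b by (simp add: G1_def R_def)
  qed
qed

lemma makespan_Ys: "makespan n p (Ys n) \<le> 2 - M"
proof -
  have Yn: "Ys n \<subseteq> {..<n}" "load p (Ys n) \<le> 2 - M" using Ys_invariant by auto
  have "load p ({..<n} - Ys n) \<le> 2 - M"
  proof (cases "M \<le> load p (Ys n)")
    case True
    then show ?thesis using load_diff[OF _ Yn(1)] total_load_le by simp
  qed (simp add: m1_load_below_M)
  with Yn show ?thesis by (simp add: makespan_def)
qed

end

theorem mainTheorem13:
  fixes M :: real and n :: nat and p :: "nat \<Rightarrow> real" and g :: "nat \<Rightarrow> nat"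
    and Ys :: "nat \<Rightarrow> nat set"
  assumes "2 / 3 \<le> M" and "M < 3 / 4"
    and "\<forall>i<n. p i > 0 \<and> g i \<in> {1, 2}"
    and "opt_makespan n p g = 1"
    and "D_run M p g n Ys"
  shows "(\<forall>j<n. load p (migrated j (Ys j) (Ys (Suc j))) \<le> M * p j)
       \<and> feasible n g (Ys n)
       \<and> makespan n p (Ys n) \<le> 2 - M"
proof -
  obtain A where A: "feasible n g A" "makespan n p A = 1"
    using opt_makespan_attained[of n g p] assms(4) by metis
  have "p i \<le> 1" if "i < n" for i
    using job_le_makespan[OF A(1), of p] assms(3) A(2) that by (simp add: less_imp_le)
  then interpret D_run_opt M n p g Ys A
    using assms A by unfold_locales auto
  have "feasible n g (Ys n)" using Ys_invariant[of n] by (auto simp: feasible_def)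
  then show ?thesis using migrated_load makespan_Ys by blast
qed

end
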